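(* Let $G_0$ be a topological group, $T$ a universal $G_0$-space, $x\in T$, and $G=Stab_{G_0}(x)=\{g\in G_0: gx=x\}$. Then $T$ is minimal if and only if $Fix_T(G)=\{y\in T: gy=y \text{ for all } g\in G\}$ is transitive with respect to $T$.
   Context: A $G_0$-space is a compact Hausdorff space with a continuous $G_0$-action. It is minimal if $\emptyset$ and the whole space are its only closed invariant subsets. A $G_0$-space $T$ is universal if every minimal $G_0$-space is the image of $T$ under a continuous surjective $G_0$-equivariant map. For a $G_0$-space $X$, a subset $Y\subset X$ is transitive with respect to $X$ if $\overline{G_0 y}=X$ for every $y\in Y$. *)

theory Defs
  imports "HOL-Analysis.Analysis"
begin

text \<open>The topological group G0 is a type of class topological_group_add
  (written additively: 0 is the identity, + the group operation).\<close>

definition G_space :: "'a topology \<Rightarrow> ('g::topological_group_add \<Rightarrow> 'a \<Rightarrow> 'a) \<Rightarrow> bool" where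
  "G_space X act \<longleftrightarrow> compact_space X \<and> Hausdorff_space X
     \<and> (\<forall>x\<in>topspace X. act 0 x = x)
     \<and> (\<forall>g h. \<forall>x\<in>topspace X. act (g + h) x = act g (act h x))
     \<and> continuous_map (prod_topology (euclidean :: 'g topology) X) X (\<lambda>(g, x). act g x)"

definition invariant_set :: "('g \<Rightarrow> 'a \<Rightarrow> 'a) \<Rightarrow> 'a set \<Rightarrow> bool" where
  "invariant_set act A \<longleftrightarrow> (\<forall>g. \<forall>y\<in>A. act g y \<in> A)"

definition minimal_G_space :: "'a topology \<Rightarrow> ('g::topological_group_add \<Rightarrow> 'a \<Rightarrow> 'a) \<Rightarrow> bool" where
  "minimal_G_space X act \<longleftrightarrow> G_space X act \<and> topspace X \<noteq> {}
     \<and> (\<forall>A. closedin X A \<and> invariant_set act A \<longrightarrow> A = {} \<or> A = topspace X)"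

definition equivariant_map ::
  "'a topology \<Rightarrow> ('g \<Rightarrow> 'a \<Rightarrow> 'a) \<Rightarrow> 'b topology \<Rightarrow> ('g \<Rightarrow> 'b \<Rightarrow> 'b) \<Rightarrow> ('a \<Rightarrow> 'b) \<Rightarrow> bool" where
  "equivariant_map X act Y act' f \<longleftrightarrow> (\<forall>g. \<forall>x\<in>topspace X. f (act g x) = act' g (f x))"

text \<open>Minimal spaces are quantified over carriers in the same ambient type as T
  (any such image has cardinality at most that of T, so this is no loss).\<close>

definition universal_G_space :: "'a topology \<Rightarrow> ('g::topological_group_add \<Rightarrow> 'a \<Rightarrow> 'a) \<Rightarrow> bool" where
  "universal_G_space T act \<longleftrightarrow> G_space T act \<and>
     (\<forall>(Y :: 'a topology) (act' :: 'g \<Rightarrow> 'a \<Rightarrow> 'a). minimal_G_space Y act' \<longrightarrow>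
        (\<exists>f. continuous_map T Y f \<and> f ` topspace T = topspace Y \<and> equivariant_map T act Y act' f))"

definition orbit :: "('g \<Rightarrow> 'a \<Rightarrow> 'a) \<Rightarrow> 'a \<Rightarrow> 'a set" where
  "orbit act y = range (\<lambda>g. act g y)"

definition transitive_wrt :: "'a set \<Rightarrow> 'a topology \<Rightarrow> ('g \<Rightarrow> 'a \<Rightarrow> 'a) \<Rightarrow> bool" where
  "transitive_wrt Y X act \<longleftrightarrow> (\<forall>y\<in>Y. X closure_of (orbit act y) = topspace X)"

definition Stab :: "('g \<Rightarrow> 'a \<Rightarrow> 'a) \<Rightarrow> 'a \<Rightarrow> 'g set" where
  "Stab act x = {g. act g x = x}"

definition Fix :: "'a topology \<Rightarrow> ('g \<Rightarrow> 'a \<Rightarrow> 'a) \<Rightarrow> 'g set \<Rightarrow> 'a set" where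
  "Fix T act G = {y \<in> topspace T. \<forall>g\<in>G. act g y = y}"

end

theory Submission
  imports Defs
begin

(* Forward direction: in a minimal G0-space the closure of every orbit is a
   nonempty closed invariant set, hence the whole space; so every point (in
   particular every point of Fix_T(G)) has a dense orbit.

   Backward direction: by compactness and Zorn's lemma T contains a minimal
   closed invariant set M, and M with the subspace topology is a minimal
   G0-space.  Universality yields an equivariant surjection f : T -> M.
   Equivariance makes f x fixed by every element of G = Stab(x), so f x lies in
   Fix_T(G) and its orbit is dense in T by hypothesis.  That orbit stays in the
   closed invariant set M, hence M = T, and T is minimal. *)

lemma G_space_act_continuous:
  fixes act :: "'g::topological_group_add \<Rightarrow> 'a \<Rightarrow> 'a"
  assumes "G_space X act"
  shows "continuous_map X X (act g)"
proof -
  have action: "continuous_map (prod_topology (euclidean :: 'g::topological_group_add topology) X) X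
      (\<lambda>(g, x). act g x)"
    using assms unfolding G_space_def by blast
  have "continuous_map X (prod_topology (euclidean :: 'g topology) X) (\<lambda>y. (g, y))"
    by (simp add: continuous_map_pairwise o_def)
  from continuous_map_compose[OF this action] show ?thesis
    by (simp add: o_def)
qed

lemma G_space_act_in_topspace:
  assumes "G_space X act" and "y \<in> topspace X"
  shows "act g y \<in> topspace X"
  using continuous_map_image_subset_topspace[OF G_space_act_continuous[OF assms(1)]] assms(2)
  by blast

lemma invariant_set_closure_of:
  assumes "G_space X act" and "invariant_set act A"
  shows "invariant_set act (X closure_of A)"
  unfolding invariant_set_def
proof (intro allI ballI)
  fix g y
  assume y: "y \<in> X closure_of A"
  have "act g ` (X closure_of A) \<subseteq> X closure_of (act g ` A)"
    by (rule continuous_map_image_closure_subset[OF G_space_act_continuous[OF assms(1)]])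
  also have "\<dots> \<subseteq> X closure_of A"
    using assms(2) unfolding invariant_set_def by (intro closure_of_mono) auto
  finally show "act g y \<in> X closure_of A"
    using y by blast
qed

lemma invariant_set_orbit:
  assumes "G_space X act" and "y \<in> topspace X"
  shows "invariant_set act (orbit act y)"
  unfolding invariant_set_def orbit_def
proof (intro allI ballI)
  fix g z
  assume "z \<in> range (\<lambda>h. act h y)"
  then obtain h where "z = act h y"
    by blast
  then have "act g z = act (g + h) y"
    using assms unfolding G_space_def by simp
  then show "act g z \<in> range (\<lambda>h. act h y)"
    by blast
qed

lemma orbit_subset_topspace:
  assumes "G_space X act" and "y \<in> topspace X"
  shows "orbit act y \<subseteq> topspace X"
  using G_space_act_in_topspace[OF assms] unfolding orbit_def by blast

lemma point_in_orbit:
  assumes "G_space X act" and "y \<in> topspace X"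
  shows "y \<in> orbit act y"
  using assms unfolding orbit_def G_space_def by (metis rangeI)

lemma minimal_G_space_orbit_dense:
  assumes min: "minimal_G_space X act" and y: "y \<in> topspace X"
  shows "X closure_of (orbit act y) = topspace X"
proof -
  have G: "G_space X act"
    using min unfolding minimal_G_space_def by blast
  have "invariant_set act (X closure_of orbit act y)"
    by (rule invariant_set_closure_of[OF G invariant_set_orbit[OF G y]])
  moreover have "y \<in> X closure_of orbit act y"
    using closure_of_subset[OF orbit_subset_topspace[OF G y]] point_in_orbit[OF G y] by blast
  moreover have "\<forall>A. closedin X A \<and> invariant_set act A \<longrightarrow> A = {} \<or> A = topspace X"
    using min unfolding minimal_G_space_def by blast
  ultimately show ?thesis
    using closedin_closure_of by blast
qed

lemma invariant_closed_set_with_dense_orbit: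
  assumes "closedin X M" and "invariant_set act M" and "y \<in> M"
    and dense: "X closure_of (orbit act y) = topspace X"
  shows "M = topspace X"
proof -
  have "orbit act y \<subseteq> M"
    using assms(2,3) unfolding orbit_def invariant_set_def by blast
  then have "X closure_of (orbit act y) \<subseteq> M"
    using assms(1) by (rule closure_of_minimal)
  then show ?thesis
    using dense closedin_subset[OF assms(1)] by blast
qed

lemma equivariant_map_Stab_fixes_image:
  assumes "equivariant_map X act Y act' f" and "x \<in> topspace X" and "g \<in> Stab act x"
  shows "act' g (f x) = f x"
proof -
  have "f (act g x) = act' g (f x)"
    using assms(1,2) unfolding equivariant_map_def by blast
  moreover have "act g x = x"
    using assms(3) unfolding Stab_def by simp
  ultimately show ?thesis
    by simp
qed

definition minimal_invariant_set :: "'a topology \<Rightarrow> ('g \<Rightarrow> 'a \<Rightarrow> 'a) \<Rightarrow> 'a set \<Rightarrow> bool" where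
  "minimal_invariant_set X act M \<longleftrightarrow> closedin X M \<and> M \<noteq> {} \<and> invariant_set act M \<and>
     (\<forall>S. closedin X S \<and> S \<noteq> {} \<and> invariant_set act S \<and> S \<subseteq> M \<longrightarrow> S = M)"

text \<open>In a compact space, a chain of nonempty closed sets has nonempty intersection
  (finite subchains have a least element).\<close>

lemma compact_space_Inter_chain_nonempty:
  assumes "compact_space X" and closed: "\<And>S. S \<in> \<C> \<Longrightarrow> closedin X S"
    and nonempty: "\<And>S. S \<in> \<C> \<Longrightarrow> S \<noteq> {}"
    and chain: "\<And>S S'. S \<in> \<C> \<Longrightarrow> S' \<in> \<C> \<Longrightarrow> S \<subseteq> S' \<or> S' \<subseteq> S"
  shows "\<Inter>\<C> \<noteq> {}"
proof -
  have fip: "\<forall>\<F>. finite \<F> \<and> \<F> \<subseteq> \<C> \<longrightarrow> \<Inter>\<F> \<noteq> {}"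
  proof (intro allI impI, elim conjE)
    fix \<F> :: "'a set set"
    assume fin: "finite \<F>" and sub: "\<F> \<subseteq> \<C>"
    show "\<Inter>\<F> \<noteq> {}"
    proof (cases "\<F> = {}")
      case False
      have "subset.chain \<C> \<F>"
        using sub chain by (auto simp: subset_chain_def)
      then have "\<Inter>\<F> \<in> \<F>"
        using Inter_in_chain fin False by blast
      then show ?thesis
        using sub nonempty by blast
    qed simp
  qed
  moreover have "\<forall>S\<in>\<C>. closedin X S"
    using closed by blast
  ultimately show ?thesis
    using compact_space_fip[THEN iffD1, OF assms(1), rule_format, of \<C>] by blast
qed

text \<open>Every nonempty G0-space contains a minimal invariant set (Zorn's lemma for
  reverse inclusion; chains are bounded by their intersection by compactness).\<close>

lemma minimal_invariant_set_exists:
  assumes G: "G_space X act" and ne: "topspace X \<noteq> {}"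
  obtains M where "minimal_invariant_set X act M"
proof -
  define \<A> where "\<A> = {S. closedin X S \<and> S \<noteq> {} \<and> invariant_set act S}"
  have top: "topspace X \<in> \<A>"
    using ne G_space_act_in_topspace[OF G] unfolding \<A>_def invariant_set_def by auto
  have po: "partial_order_on \<A> (relation_of (\<lambda>S S'. S' \<subseteq> S) \<A>)"
    by (rule partial_order_on_relation_ofI) auto
  have "\<exists>U\<in>\<A>. \<forall>S\<in>\<C>. U \<subseteq> S" if \<C>: "\<C> \<in> Chains (relation_of (\<lambda>S S'. S' \<subseteq> S) \<A>)" for \<C>
  proof (cases "\<C> = {}")
    case True
    then show ?thesis
      using top by blast
  next
    case False
    have in_\<A>: "\<C> \<subseteq> \<A>" and chain: "\<And>S S'. S \<in> \<C> \<Longrightarrow> S' \<in> \<C> \<Longrightarrow> S \<subseteq> S' \<or> S' \<subseteq> S"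
      using \<C> unfolding Chains_def relation_of_def by blast+
    have "compact_space X"
      using G unfolding G_space_def by blast
    then have "\<Inter>\<C> \<noteq> {}"
      by (rule compact_space_Inter_chain_nonempty) (use in_\<A> chain in \<open>auto simp: \<A>_def\<close>)
    moreover have "closedin X (\<Inter>\<C>)"
      using False in_\<A> unfolding \<A>_def by (intro closedin_Inter) auto
    moreover have "invariant_set act (\<Inter>\<C>)"
      using in_\<A> unfolding \<A>_def invariant_set_def by blast
    ultimately show ?thesis
      unfolding \<A>_def by blast
  qed
  then obtain M where "M \<in> \<A>" and "\<forall>S\<in>\<A>. S \<subseteq> M \<longrightarrow> S = M"
    using predicate_Zorn[OF po] by blast
  then have "minimal_invariant_set X act M"
    unfolding minimal_invariant_set_def \<A>_def by blast
  then show ?thesis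
    using that by blast
qed

lemma G_space_subtopology:
  fixes act :: "'g::topological_group_add \<Rightarrow> 'a \<Rightarrow> 'a"
  assumes G: "G_space X act" and M: "closedin X M" "invariant_set act M"
  shows "G_space (subtopology X M) act"
proof -
  have action: "continuous_map (prod_topology (euclidean :: 'g::topological_group_add topology) X) X
      (\<lambda>(g, x). act g x)"
    using G unfolding G_space_def by blast
  have prod_sub: "prod_topology (euclidean :: 'g topology) (subtopology X M)
      = subtopology (prod_topology euclidean X) (UNIV \<times> M)"
    by (simp add: subtopology_Times)
  have "(\<lambda>(g, x). act g x) ` topspace (subtopology (prod_topology (euclidean :: 'g topology) X)
      (UNIV \<times> M)) \<subseteq> M"
    using M(2) unfolding invariant_set_def by auto
  with continuous_map_from_subtopology[OF action]
  have "continuous_map (prod_topology (euclidean :: 'g topology) (subtopology X M)) (subtopology X M)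
      (\<lambda>(g, x). act g x)"
    unfolding prod_sub continuous_map_in_subtopology by blast
  moreover have "compact_space (subtopology X M)"
    using G M by (intro compact_space_subtopology closedin_compact_space) (auto simp: G_space_def)
  moreover have "Hausdorff_space (subtopology X M)"
    using G by (intro Hausdorff_space_subtopology) (auto simp: G_space_def)
  ultimately show ?thesis
    using G unfolding G_space_def by auto
qed

lemma minimal_G_space_subtopology:
  assumes G: "G_space X act" and M: "minimal_invariant_set X act M"
  shows "minimal_G_space (subtopology X M) act"
proof -
  have top_M: "topspace (subtopology X M) = M"
    using M closedin_subset unfolding minimal_invariant_set_def by auto
  have "A = {} \<or> A = M" if "closedin (subtopology X M) A" "invariant_set act A" for A
  proof -
    have "closedin X A"
      using that(1) M closedin_trans_full unfolding minimal_invariant_set_def by blast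
    moreover have "A \<subseteq> M"
      using closedin_subset[OF that(1)] top_M by blast
    ultimately show ?thesis
      using M that(2) unfolding minimal_invariant_set_def by blast
  qed
  moreover have "G_space (subtopology X M) act" and "M \<noteq> {}"
    using G_space_subtopology[OF G] M unfolding minimal_invariant_set_def by blast+
  ultimately show ?thesis
    unfolding minimal_G_space_def top_M by blast
qed

lemma minimal_G_space_if_topspace_minimal:
  assumes "G_space X act" and "minimal_invariant_set X act (topspace X)"
  shows "minimal_G_space X act"
  using assms closedin_subset unfolding minimal_G_space_def minimal_invariant_set_def by blast

theorem mainTheorem12:
  fixes T :: "'a topology" and act :: "'g::topological_group_add \<Rightarrow> 'a \<Rightarrow> 'a" and x :: 'a
  assumes "universal_G_space T act" and "x \<in> topspace T"
  shows "minimal_G_space T act \<longleftrightarrow> transitive_wrt (Fix T act (Stab act x)) T act"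
proof
  assume minimal: "minimal_G_space T act"
  have "T closure_of (orbit act y) = topspace T" if "y \<in> Fix T act (Stab act x)" for y
    using minimal_G_space_orbit_dense[OF minimal] that unfolding Fix_def by blast
  then show "transitive_wrt (Fix T act (Stab act x)) T act"
    unfolding transitive_wrt_def by blast
next
  assume transitive: "transitive_wrt (Fix T act (Stab act x)) T act"
  have G: "G_space T act"
    using assms(1) unfolding universal_G_space_def by blast
  obtain M where M: "minimal_invariant_set T act M"
    using minimal_invariant_set_exists[OF G] assms(2) by blast
  then have M_closed: "closedin T M" and M_inv: "invariant_set act M"
    unfolding minimal_invariant_set_def by blast+
  have top_M: "topspace (subtopology T M) = M"
    using closedin_subset[OF M_closed] by auto
  have universal: "\<exists>f. continuous_map T Y f \<and> f ` topspace T = topspace Y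
      \<and> equivariant_map T act Y act' f"
    if "minimal_G_space Y act'" for Y :: "'a topology" and act' :: "'g \<Rightarrow> 'a \<Rightarrow> 'a"
    using assms(1) that unfolding universal_G_space_def by blast
  from universal[OF minimal_G_space_subtopology[OF G M]] obtain f where f_onto: "f ` topspace T = M"
    and f_equiv: "equivariant_map T act (subtopology T M) act f"
    unfolding top_M by blast
  have fx_M: "f x \<in> M"
    using f_onto assms(2) by blast
  have "\<forall>g\<in>Stab act x. act g (f x) = f x"
    using equivariant_map_Stab_fixes_image[OF f_equiv assms(2)] by blast
  then have "f x \<in> Fix T act (Stab act x)"
    using fx_M closedin_subset[OF M_closed] unfolding Fix_def by blast
  then have "T closure_of (orbit act (f x)) = topspace T"
    using transitive unfolding transitive_wrt_def by blast
  then have "M = topspace T"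
    by (rule invariant_closed_set_with_dense_orbit[OF M_closed M_inv fx_M])
  then show "minimal_G_space T act"
    using minimal_G_space_if_topspace_minimal[OF G] M by simp
qed

end
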